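(* Let $N,M,n$ be integers with $1\le M\le N$ and $1\le n\le N$, and let $X\sim\mathrm{HypGeo}(N;M,n)$. Then $$E\Big(\Big|\log\frac{X}{EX}\Big|\,\mathbb{1}_{\{X>0\}}\Big)\le \frac{4N\log N}{nM}+2\sqrt{\frac{N}{nM}} .$$
   Context: $X\sim\mathrm{HypGeo}(N;M,n)$ means $P(X=k)=\binom{M}{k}\binom{N-M}{n-k}/\binom{N}{n}$ for $k=0,\dots,n$. $\log$ is the natural logarithm and $\mathbb{1}_A$ is the indicator of the event $A$. *)

theory Defs
  imports Complex_Main
begin

definition hypgeo_prob :: "nat \<Rightarrow> nat \<Rightarrow> nat \<Rightarrow> nat \<Rightarrow> real" where
  "hypgeo_prob N M n k =
     real (M choose k) * real ((N - M) choose (n - k)) / real (N choose n)"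

definition hypgeo_expect :: "nat \<Rightarrow> nat \<Rightarrow> nat \<Rightarrow> (nat \<Rightarrow> real) \<Rightarrow> real" where
  "hypgeo_expect N M n g = (\<Sum>k\<in>{0..n}. hypgeo_prob N M n k * g k)"

end

theory Submission
  imports Defs
begin

(* Write mu = nM/N for the mean. On X >= mu/2 one has |ln (X/mu)| <= 2|X - mu|/mu, which AM-GM
   bounds by (X - mu)^2/mu^(3/2) + 1/sqrt mu; on 1 <= X < mu/2 one has
   |ln (X/mu)| <= ln N <= 4 ln N (X - mu)^2/mu^2.  So the integrand is at most A (X - mu)^2 + 1/sqrt mu
   with A = mu^(-3/2) + 4 ln N / mu^2, and it remains to see Var X <= mu.  By Vandermonde's identity
   E[X(X-1)] = M(M-1) n(n-1) / (N(N-1)) <= mu^2, and Var X = E[X(X-1)] + mu - mu^2. *)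

lemma sum_times_choose_absorb:
  "(\<Sum>k\<le>Suc n. k * (m choose k) * h k) = m * (\<Sum>j\<le>n. ((m - 1) choose j) * h (Suc j))"
proof -
  have "(\<Sum>k\<le>Suc n. k * (m choose k) * h k) = (\<Sum>j\<le>n. Suc j * (m choose Suc j) * h (Suc j))"
    by (simp add: sum.atMost_Suc_shift del: sum.atMost_Suc)
  also have "\<dots> = (\<Sum>j\<le>n. m * (((m - 1) choose j) * h (Suc j)))"
    using times_binomial_minus1_eq[of "Suc _" m] by (simp add: mult.assoc)
  finally show ?thesis
    by (simp add: sum_distrib_left)
qed

lemma vandermonde_first_moment:
  "(\<Sum>k\<le>Suc n. k * (m choose k) * (K choose (Suc n - k))) = m * ((m + K - 1) choose n)"
  unfolding sum_times_choose_absorb by (cases m) (simp_all add: vandermonde)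

lemma vandermonde_second_factorial_moment:
  "(\<Sum>k\<le>Suc (Suc n). k * (k - 1) * (m choose k) * (K choose (Suc (Suc n) - k)))
     = m * (m - 1) * ((m + K - 2) choose n)"
proof -
  have "(\<Sum>k\<le>Suc (Suc n). k * (k - 1) * (m choose k) * (K choose (Suc (Suc n) - k)))
      = (\<Sum>k\<le>Suc (Suc n). k * (m choose k) * ((k - 1) * (K choose (Suc (Suc n) - k))))"
    by (simp add: ac_simps)
  also have "\<dots> = m * (\<Sum>j\<le>Suc n. j * ((m - 1) choose j) * (K choose (Suc n - j)))"
    by (subst sum_times_choose_absorb) (simp add: ac_simps del: sum.atMost_Suc)
  also have "\<dots> = m * (m - 1) * ((m + K - 2) choose n)"
    unfolding vandermonde_first_moment by (cases m) (simp_all add: numeral_2_eq_2 algebra_simps)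
  finally show ?thesis .
qed

lemma abs_ln_le_twice_abs_diff_one:
  fixes y :: real
  assumes "y \<ge> 1/2"
  shows "\<bar>ln y\<bar> \<le> 2 * \<bar>y - 1\<bar>"
proof (cases "y \<ge> 1")
  case True
  then show ?thesis using ln_le_minus_one[of y] by auto
next
  case False
  have "- ln y = ln (1 / y)" using assms by (simp add: ln_div)
  also have "\<dots> \<le> 1 / y - 1" using assms by (intro ln_le_minus_one) auto
  also have "\<dots> \<le> 2 * (1 - y)"
  proof -
    have "(2 * y - 1) * (1 - y) \<ge> 0" using assms False by simp
    then show ?thesis using assms by (simp add: field_simps)
  qed
  finally show ?thesis using False assms by auto
qed

lemma abs_div_le_am_gm:
  fixes d \<mu> :: real
  assumes "\<mu> > 0"
  shows "2 * \<bar>d\<bar> / \<mu> \<le> d\<^sup>2 / (\<mu> * sqrt \<mu>) + 1 / sqrt \<mu>"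
proof -
  have s: "sqrt \<mu> > 0" "(sqrt \<mu>)\<^sup>2 = \<mu>" using assms by auto
  have "2 * \<bar>d\<bar> * sqrt \<mu> \<le> d\<^sup>2 + \<mu>"
  proof -
    have "0 \<le> (\<bar>d\<bar> - sqrt \<mu>)\<^sup>2" by simp
    then show ?thesis using s(2) by (simp add: power2_diff)
  qed
  then show ?thesis using s by (simp add: field_simps)
qed

lemma abs_ln_div_le:
  fixes x \<mu> L :: real
  assumes x: "x \<ge> 1" and \<mu>: "0 < \<mu>" "\<mu> \<le> L" and L: "1 \<le> L"
  shows "\<bar>ln (x / \<mu>)\<bar> \<le> 2 * \<bar>x - \<mu>\<bar> / \<mu> + 4 * ln L * (x - \<mu>)\<^sup>2 / \<mu>\<^sup>2"
proof (cases "x \<ge> \<mu> / 2")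
  case True
  have "\<bar>ln (x / \<mu>)\<bar> \<le> 2 * \<bar>x / \<mu> - 1\<bar>"
    using True \<mu> by (intro abs_ln_le_twice_abs_diff_one) (simp add: field_simps)
  also have "\<dots> = 2 * \<bar>x - \<mu>\<bar> / \<mu>"
    using \<mu> by (simp add: field_simps abs_div_pos[symmetric])
  moreover have "0 \<le> 4 * ln L * (x - \<mu>)\<^sup>2 / \<mu>\<^sup>2" using L by simp
  ultimately show ?thesis by linarith
next
  case False
  have "\<bar>ln (x / \<mu>)\<bar> = ln \<mu> - ln x" using False x \<mu> by (simp add: ln_div)
  also have "\<dots> \<le> ln L"
    using x \<mu> ln_ge_zero[of x] ln_le_cancel_iff[of \<mu> L] by linarith
  also have "\<dots> \<le> 4 * ln L * (x - \<mu>)\<^sup>2 / \<mu>\<^sup>2"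
  proof -
    have "(\<mu> / 2)\<^sup>2 \<le> (\<mu> - x)\<^sup>2" using False x \<mu> by (intro power_mono) auto
    then have "(\<mu> / 2)\<^sup>2 \<le> (x - \<mu>)\<^sup>2" by (simp add: power2_commute)
    then have "1 \<le> 4 * (x - \<mu>)\<^sup>2 / \<mu>\<^sup>2" using \<mu> by (simp add: field_simps)
    then have "ln L * 1 \<le> ln L * (4 * (x - \<mu>)\<^sup>2 / \<mu>\<^sup>2)"
      using L by (intro mult_left_mono) auto
    then show ?thesis by (simp add: mult.assoc mult.left_commute)
  qed
  moreover have "0 \<le> 2 * \<bar>x - \<mu>\<bar> / \<mu>" using \<mu> by simp
  ultimately show ?thesis by linarith
qed

lemma abs_ln_div_le_quadratic:
  fixes x \<mu> L :: real
  assumes "x \<ge> 1" "0 < \<mu>" "\<mu> \<le> L" "1 \<le> L"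
  shows "\<bar>ln (x / \<mu>)\<bar> \<le> (1 / (\<mu> * sqrt \<mu>) + 4 * ln L / \<mu>\<^sup>2) * (x - \<mu>)\<^sup>2 + 1 / sqrt \<mu>"
  using abs_ln_div_le[OF assms] abs_div_le_am_gm[OF assms(2), of "x - \<mu>"]
  by (simp add: algebra_simps)

lemma hypgeo_expect_eq_sum:
  "hypgeo_expect N M n g
     = (\<Sum>k\<le>n. real (M choose k) * real ((N - M) choose (n - k)) * g k) / real (N choose n)"
  by (simp add: hypgeo_expect_def hypgeo_prob_def atLeast0AtMost sum_divide_distrib)

lemma hypgeo_expect_add:
  "hypgeo_expect N M n (\<lambda>k. f k + g k) = hypgeo_expect N M n f + hypgeo_expect N M n g"
  by (simp add: hypgeo_expect_def distrib_left sum.distrib)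

lemma hypgeo_expect_cmult:
  "hypgeo_expect N M n (\<lambda>k. c * f k) = c * hypgeo_expect N M n f"
  by (simp add: hypgeo_expect_def sum_distrib_left ac_simps)

lemma hypgeo_expect_mono:
  assumes "\<And>k. k \<le> n \<Longrightarrow> f k \<le> g k"
  shows "hypgeo_expect N M n f \<le> hypgeo_expect N M n g"
  unfolding hypgeo_expect_def hypgeo_prob_def
  using assms by (intro sum_mono mult_left_mono) auto

lemma hypgeo_expect_const:
  assumes "M \<le> N" "n \<le> N"
  shows "hypgeo_expect N M n (\<lambda>_. c) = c"
proof -
  have "(\<Sum>k\<le>n. (M choose k) * ((N - M) choose (n - k))) = N choose n"
    using vandermonde[of M "N - M" n] assms(1) by simp
  then have "(\<Sum>k\<le>n. real (M choose k) * real ((N - M) choose (n - k))) = real (N choose n)"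
    by (metis (no_types, lifting) of_nat_mult of_nat_sum sum.cong)
  then show ?thesis
    using assms(2) unfolding hypgeo_expect_eq_sum by (simp flip: sum_distrib_right)
qed

lemma hypgeo_mean:
  assumes "M \<le> N" "n \<le> N"
  shows "hypgeo_expect N M n real = real n * real M / real N"
proof (cases n)
  case 0
  then show ?thesis by (simp add: hypgeo_expect_def)
next
  case (Suc n')
  have "(\<Sum>k\<le>n. (M choose k) * ((N - M) choose (n - k)) * k) = M * ((N - 1) choose n')"
    using vandermonde_first_moment[where n = n' and m = M and K = "N - M"] assms(1)
    by (simp add: Suc ac_simps del: sum.atMost_Suc)
  then have sum: "(\<Sum>k\<le>n. real (M choose k) * real ((N - M) choose (n - k)) * real k)
      = real M * real ((N - 1) choose n')"
    by (metis (no_types, lifting) of_nat_mult of_nat_sum sum.cong)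
  have "n * (N choose n) = N * ((N - 1) choose n')"
    using times_binomial_minus1_eq[of n N] by (simp add: Suc)
  then have "real n * real (N choose n) = real N * real ((N - 1) choose n')"
    by (metis of_nat_mult)
  moreover have "real (N choose n) > 0" "real N > 0" using assms(2) Suc by auto
  ultimately show ?thesis
    unfolding hypgeo_expect_eq_sum sum by (simp add: field_simps)
qed

lemma hypgeo_second_factorial_moment:
  assumes "M \<le> N" "n \<le> N"
  shows "hypgeo_expect N M n (\<lambda>k. real (k * (k - 1)))
           = real (M * (M - 1)) * real (n * (n - 1)) / real (N * (N - 1))"
proof (cases "n \<le> 1")
  case True
  then have "k * (k - 1) = 0" if "k \<le> n" for k
    using that True by (cases k) auto
  then show ?thesis
    using True by (simp add: hypgeo_expect_def)
next
  case False
  define n' where "n' = n - 2"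
  have n: "n = Suc (Suc n')" using False by (simp add: n'_def)
  have "(\<Sum>k\<le>n. (M choose k) * ((N - M) choose (n - k)) * (k * (k - 1)))
      = M * (M - 1) * ((N - 2) choose n')"
    using vandermonde_second_factorial_moment[where n = n' and m = M and K = "N - M"] assms(1)
    by (simp add: n ac_simps del: sum.atMost_Suc)
  then have sum: "(\<Sum>k\<le>n. real (M choose k) * real ((N - M) choose (n - k)) * real (k * (k - 1)))
      = real (M * (M - 1)) * real ((N - 2) choose n')"
    by (metis (no_types, lifting) of_nat_mult of_nat_sum sum.cong)
  have first: "n * (N choose n) = N * ((N - 1) choose Suc n')"
    using times_binomial_minus1_eq[of n N] by (simp add: n)
  have second: "Suc n' * ((N - 1) choose Suc n') = (N - 1) * ((N - 2) choose n')"
    using times_binomial_minus1_eq[of "Suc n'" "N - 1"] by (simp add: numeral_2_eq_2)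
  have "n * (n - 1) * (N choose n) = Suc n' * (n * (N choose n))"
    by (simp only: n diff_Suc_1 mult_ac)
  also have "\<dots> = N * (Suc n' * ((N - 1) choose Suc n'))"
    unfolding first by (rule mult.left_commute)
  also have "\<dots> = N * (N - 1) * ((N - 2) choose n')"
    unfolding second by (rule mult.assoc[symmetric])
  finally have "real (n * (n - 1)) * real (N choose n) = real (N * (N - 1)) * real ((N - 2) choose n')"
    by (metis of_nat_mult)
  moreover have "real (N choose n) > 0" "real (N * (N - 1)) > 0" using assms(2) n by auto
  ultimately have "real ((N - 2) choose n') / real (N choose n) = real (n * (n - 1)) / real (N * (N - 1))"
    by (metis frac_eq_eq mult.commute order_less_irrefl)
  then show ?thesis
    unfolding hypgeo_expect_eq_sum sum by (metis times_divide_eq_right)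
qed

lemma falling_products_ratio_le_square:
  fixes M n N :: nat
  assumes "M \<le> N" "n \<le> N"
  shows "real (M * (M - 1)) * real (n * (n - 1)) / real (N * (N - 1)) \<le> (real n * real M / real N)\<^sup>2"
proof (cases "M = 0 \<or> n = 0 \<or> N \<le> 1")
  case True
  then have "M * (M - 1) * (n * (n - 1)) = 0 \<or> N * (N - 1) = 0" using assms by auto
  then show ?thesis by auto
next
  case False
  then have pos: "1 \<le> real M" "1 \<le> real n" "2 \<le> real N" by auto
  have "real n * real M \<le> real N * real M" using assms(2) by (simp add: mult_right_mono)
  also have "\<dots> \<le> real N * (real M + real n - 1)" using pos by (intro mult_left_mono) auto
  finally have "(real M - 1) * (real n - 1) / (real N - 1) \<le> real n * real M / real N"
    using pos by (simp add: field_simps)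
  then have "(real n * real M / real N) * ((real M - 1) * (real n - 1) / (real N - 1))
      \<le> (real n * real M / real N) * (real n * real M / real N)"
    using pos by (intro mult_left_mono) auto
  then show ?thesis
    using False by (simp add: of_nat_diff power2_eq_square field_simps)
qed

lemma hypgeo_second_factorial_moment_le:
  assumes "M \<le> N" "n \<le> N"
  shows "hypgeo_expect N M n (\<lambda>k. real k * (real k - 1)) \<le> (real n * real M / real N)\<^sup>2"
proof -
  have falling: "(\<lambda>k. real k * (real k - 1)) = (\<lambda>k. real (k * (k - 1)))"
  proof
    show "real k * (real k - 1) = real (k * (k - 1))" for k
      by (cases k) (auto simp: algebra_simps)
  qed
  show ?thesis
    unfolding falling hypgeo_second_factorial_moment[OF assms]
    by (rule falling_products_ratio_le_square[OF assms])
qed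

lemma hypgeo_variance_le_mean:
  assumes "M \<le> N" "n \<le> N"
  defines "\<mu> \<equiv> real n * real M / real N"
  shows "hypgeo_expect N M n (\<lambda>k. (real k - \<mu>)\<^sup>2) \<le> \<mu>"
proof -
  have mean: "hypgeo_expect N M n real = \<mu>"
    unfolding \<mu>_def using assms(1,2) by (rule hypgeo_mean)
  have "(\<lambda>k. (real k - \<mu>)\<^sup>2) = (\<lambda>k. real k * (real k - 1) + ((1 - 2 * \<mu>) * real k + \<mu>\<^sup>2))"
    by (simp add: power2_eq_square algebra_simps)
  then have "hypgeo_expect N M n (\<lambda>k. (real k - \<mu>)\<^sup>2)
      = hypgeo_expect N M n (\<lambda>k. real k * (real k - 1)) + (1 - 2 * \<mu>) * \<mu> + \<mu>\<^sup>2"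
    using assms(1,2) by (simp add: hypgeo_expect_add hypgeo_expect_cmult hypgeo_expect_const mean)
  also have "\<dots> \<le> \<mu>\<^sup>2 + (1 - 2 * \<mu>) * \<mu> + \<mu>\<^sup>2"
    using hypgeo_second_factorial_moment_le[OF assms(1,2)] by (simp add: \<mu>_def)
  also have "\<dots> = \<mu>" by (simp add: power2_eq_square algebra_simps)
  finally show ?thesis .
qed

theorem lemma5:
  fixes N M n :: nat
  assumes "1 \<le> M" and "M \<le> N" and "1 \<le> n" and "n \<le> N"
  shows "hypgeo_expect N M n
           (\<lambda>k. \<bar>ln (real k / hypgeo_expect N M n real)\<bar> * (if k > 0 then 1 else 0))
         \<le> 4 * real N * ln (real N) / (real n * real M) + 2 * sqrt (real N / (real n * real M))"
proof -
  define \<mu> where "\<mu> = real n * real M / real N"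
  define A where "A = 1 / (\<mu> * sqrt \<mu>) + 4 * ln (real N) / \<mu>\<^sup>2"
  have N: "1 \<le> real N" using assms by simp
  have \<mu>: "0 < \<mu>" "\<mu> \<le> real N"
    using assms mult_mono[of "real n" "real N" "real M" "real N"] by (auto simp: \<mu>_def field_simps)
  have "0 \<le> A" using \<mu> N by (simp add: A_def)
  have pointwise: "\<bar>ln (real k / \<mu>)\<bar> * (if k > 0 then 1 else 0) \<le> A * (real k - \<mu>)\<^sup>2 + 1 / sqrt \<mu>" for k
    using abs_ln_div_le_quadratic[of "real k" \<mu> "real N"] \<mu> N \<open>0 \<le> A\<close>
    by (cases "k = 0") (simp_all add: A_def)
  have "hypgeo_expect N M n (\<lambda>k. \<bar>ln (real k / hypgeo_expect N M n real)\<bar> * (if k > 0 then 1 else 0))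
      \<le> hypgeo_expect N M n (\<lambda>k. A * (real k - \<mu>)\<^sup>2 + 1 / sqrt \<mu>)"
    unfolding hypgeo_mean[OF assms(2,4)] \<mu>_def[symmetric] by (intro hypgeo_expect_mono pointwise)
  also have "\<dots> \<le> A * \<mu> + 1 / sqrt \<mu>"
    using hypgeo_variance_le_mean[OF assms(2,4)] \<open>0 \<le> A\<close> unfolding \<mu>_def[symmetric]
    by (simp add: hypgeo_expect_add hypgeo_expect_cmult hypgeo_expect_const assms mult_left_mono)
  also have "\<dots> = 4 * real N * ln (real N) / (real n * real M) + 2 * sqrt (real N / (real n * real M))"
    using \<mu> by (simp add: A_def \<mu>_def real_sqrt_divide field_simps power2_eq_square)
  finally show ?thesis .
qed

end
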